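(* Let $p_0\ge1$, $q_0\ge0$ be integers and $(X_t)_{t\in\mathbb{Z}}$ a stationary ARMA$(p_0,q_0)$ process $\Phi(B)X_t=\Theta(B)\epsilon_t$, where $(\epsilon_t)$ has mean $0$ and finite variance, $BX_t=X_{t-1}$, $\Phi(z)=1+\phi_1z+\dots+\phi_{p_0}z^{p_0}$ ($\phi_{p_0}\ne0$), $\Theta(z)=1+\theta_1z+\dots+\theta_{q_0}z^{q_0}$ ($\theta_{q_0}\ne0$), $\Phi,\Theta$ without common roots, and $X$ causal, i.e. $\Phi(z)\ne0$ for all $z\in\mathbb{C}$ with $|z|\le1$. Then for any integer $r>0$, if $\mathbb{E}|X_0|^{2r}<\infty$, the process $(|X_t|^r)_{t\in\mathbb{Z}}$ is geometrically $L_2$-NED on $(\epsilon_t)$.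
   Context: $\mathcal{F}_{\epsilon,s,t}=\sigma(\epsilon_u:s\le u\le t)$. A stationary process $(Y_n)$ is $L_2$-NED on $(\epsilon_n)$ with constants $\nu(k)$ if $\|Y_0-\mathbb{E}[Y_0\mid\mathcal{F}_{\epsilon,-k,k}]\|_2\le\nu(k)$ for $k\ge0$ with $\nu(k)\to0$; it is geometrically $L_2$-NED if one can take $\nu(k)=O(e^{-\delta k})$ for some $\delta>0$. *)

theory Defs
  imports "HOL-Probability.Probability"
begin

definition stationary_proc :: "'a measure \<Rightarrow> (int \<Rightarrow> 'a \<Rightarrow> real) \<Rightarrow> bool" where
  "stationary_proc M Y \<longleftrightarrow>
     (\<forall>t. Y t \<in> borel_measurable M) \<and>
     (\<forall>h::int. distr M (Pi\<^sub>M UNIV (\<lambda>_. borel)) (\<lambda>\<omega> t. Y (t + h) \<omega>)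
             = distr M (Pi\<^sub>M UNIV (\<lambda>_. borel)) (\<lambda>\<omega> t. Y t \<omega>))"

definition gen_sigma :: "'a measure \<Rightarrow> (int \<Rightarrow> 'a \<Rightarrow> real) \<Rightarrow> int \<Rightarrow> int \<Rightarrow> 'a measure" where
  "gen_sigma M e s t =
     sigma (space M) {e u -` B \<inter> space M | u B. s \<le> u \<and> u \<le> t \<and> B \<in> sets borel}"

definition ned_err :: "'a measure \<Rightarrow> (int \<Rightarrow> 'a \<Rightarrow> real) \<Rightarrow> (int \<Rightarrow> 'a \<Rightarrow> real) \<Rightarrow> nat \<Rightarrow> real" where
  "ned_err M Y e k =
     sqrt (\<integral>\<omega>. (Y 0 \<omega> - real_cond_exp M (gen_sigma M e (- int k) (int k)) (Y 0) \<omega>)\<^sup>2 \<partial>M)"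

definition L2_NED :: "'a measure \<Rightarrow> (int \<Rightarrow> 'a \<Rightarrow> real) \<Rightarrow> (int \<Rightarrow> 'a \<Rightarrow> real) \<Rightarrow> (nat \<Rightarrow> real) \<Rightarrow> bool" where
  "L2_NED M Y e \<nu> \<longleftrightarrow>
     stationary_proc M Y \<and>
     integrable M (\<lambda>\<omega>. (Y 0 \<omega>)\<^sup>2) \<and>
     (\<forall>k. ned_err M Y e k \<le> \<nu> k) \<and> \<nu> \<longlonglongrightarrow> 0"

definition geom_L2_NED :: "'a measure \<Rightarrow> (int \<Rightarrow> 'a \<Rightarrow> real) \<Rightarrow> (int \<Rightarrow> 'a \<Rightarrow> real) \<Rightarrow> bool" where
  "geom_L2_NED M Y e \<longleftrightarrow>
     (\<exists>\<nu> \<delta>. \<delta> > 0 \<and> L2_NED M Y e \<nu> \<and> \<nu> \<in> O(\<lambda>k. exp (- \<delta> * real k)))"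

definition lagpoly :: "(nat \<Rightarrow> real) \<Rightarrow> nat \<Rightarrow> complex \<Rightarrow> complex" where
  "lagpoly c n z = 1 + (\<Sum>j=1..n. complex_of_real (c j) * z ^ j)"

end

(*
  Causality makes 1/Phi(z) = sum_j psi_j z^j analytic on a disc of radius > 1, so the
  psi_j decay geometrically.  Truncating the causal inversion X_0 = sum_j psi_j u_{-j}
  (u_t = Theta(B) eps_t) after n terms gives a variable S measurable w.r.t. eps_{-k}, ..., eps_0
  for k = n + q0 - 1, and X_0 - S is a combination of the p0 lagged values X_{-m}, n <= m < n + p0,
  with coefficients O(rho^n).  Since ||x|^r - |y|^r| <= r |x - y| (|x| + |y|)^(r - 1), stationarity
  and the 2r-th moment give E (|X_0|^r - |S|^r)^2 = O(rho^(2n)); the conditional expectation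
  does at least as well, being the best L2 approximation by F_{eps,-k,k}-measurable variables.
*)

theory Submission
  imports Defs "HOL-Complex_Analysis.Complex_Analysis"
begin

definition lag_coeff :: "(nat \<Rightarrow> real) \<Rightarrow> nat \<Rightarrow> nat \<Rightarrow> real" where
  "lag_coeff c n k = (if k = 0 then 1 else if k \<le> n then c k else 0)"

definition lag_poly :: "(nat \<Rightarrow> real) \<Rightarrow> nat \<Rightarrow> complex poly" where
  "lag_poly c n = (\<Sum>k\<le>n. monom (complex_of_real (lag_coeff c n k)) k)"

lemma abs_lag_coeff_le: "\<bar>lag_coeff c n k\<bar> \<le> 1 + (\<Sum>i\<le>n. \<bar>c i\<bar>)"
proof (cases "k = 0 \<or> n < k")
  case True
  then show ?thesis by (auto simp: lag_coeff_def intro: sum_nonneg)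
next
  case False
  then have "\<bar>c k\<bar> \<le> (\<Sum>i\<le>n. \<bar>c i\<bar>)" by (intro member_le_sum) auto
  with False show ?thesis by (simp add: lag_coeff_def)
qed

lemma coeff_lag_poly: "coeff (lag_poly c n) k = complex_of_real (lag_coeff c n k)"
  by (simp add: lag_poly_def coeff_sum coeff_monom lag_coeff_def)

lemma poly_lag_poly: "poly (lag_poly c n) z = lagpoly c n z"
proof -
  have "poly (lag_poly c n) z = 1 + (\<Sum>k=1..n. complex_of_real (lag_coeff c n k) * z ^ k)"
    by (simp add: lag_poly_def poly_sum poly_monom atMost_atLeast0 sum.atLeast_Suc_atMost lag_coeff_def)
  also have "(\<Sum>k=1..n. complex_of_real (lag_coeff c n k) * z ^ k)
      = (\<Sum>k=1..n. complex_of_real (c k) * z ^ k)"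
    by (intro sum.cong) (auto simp: lag_coeff_def)
  finally show ?thesis by (simp add: lagpoly_def)
qed

lemma fps_inverse_coeff_geometric_decay:
  fixes p :: "complex poly"
  assumes no_roots: "\<And>z. cmod z \<le> 1 \<Longrightarrow> poly p z \<noteq> 0"
  obtains B \<rho> where "0 < \<rho>" "\<rho> < 1" "\<And>j. cmod (fps_nth (inverse (fps_of_poly p)) j) \<le> B * \<rho> ^ j"
proof -
  define P where "P = inverse (fps_of_poly p)"
  have "p \<noteq> 0" using no_roots[of 0] by auto
  then have fin: "finite {z. poly p z = 0}" by (rule poly_roots_finite)
  define R where "R = Min (insert 2 (cmod ` {z. poly p z = 0}))"
  have R: "1 < R"
  proof -
    have "1 < cmod z" if "poly p z = 0" for z using no_roots that by (meson not_le)
    then show ?thesis unfolding R_def using fin by (subst Min_gr_iff) auto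
  qed
  have "poly p z \<noteq> 0" if "cmod z < R" for z
  proof
    assume "poly p z = 0"
    then have "R \<le> cmod z" unfolding R_def using fin by (intro Min_le) auto
    with that show False by simp
  qed
  then have "min (ereal R) (fps_conv_radius (fps_of_poly p)) \<le> fps_conv_radius P"
    unfolding P_def by (intro fps_conv_radius_inverse) auto
  then have radius: "ereal R \<le> fps_conv_radius P" by simp
  define s where "s = (1 + R) / 2"
  have s: "1 < s" "s < R" using R by (auto simp: s_def)
  have "ereal (norm (complex_of_real s)) < fps_conv_radius P"
  proof -
    have "ereal s < ereal R" using s by simp
    also note radius
    finally show ?thesis using s by simp
  qed
  then have "summable (\<lambda>j. fps_nth P j * complex_of_real s ^ j)" by (rule summable_fps)
  then have "(\<lambda>j. fps_nth P j * complex_of_real s ^ j) \<longlonglongrightarrow> 0"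
    by (rule summable_LIMSEQ_zero)
  then have "Bseq (\<lambda>j. fps_nth P j * complex_of_real s ^ j)"
    by (intro convergent_imp_Bseq convergentI)
  then obtain B where B: "\<And>j. norm (fps_nth P j * complex_of_real s ^ j) \<le> B"
    by (auto simp: Bseq_def)
  show ?thesis
  proof
    show "0 < 1 / s" "1 / s < 1" using s by auto
    show "cmod (fps_nth (inverse (fps_of_poly p)) j) \<le> B * (1 / s) ^ j" for j
    proof -
      have "cmod (fps_nth P j) = norm (fps_nth P j * complex_of_real s ^ j) / s ^ j"
        using s by (simp add: norm_mult norm_power)
      also have "\<dots> \<le> B / s ^ j" using s B by (intro divide_right_mono) auto
      finally show ?thesis by (simp add: P_def power_divide)
    qed
  qed
qed

lemma lag_coeff_inverse:
  assumes "\<forall>z. cmod z \<le> 1 \<longrightarrow> lagpoly c n z \<noteq> 0"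
  obtains \<psi> B \<rho> where "0 < \<rho>" "\<rho> < 1" "\<And>j. \<bar>\<psi> j\<bar> \<le> B * \<rho> ^ j"
    and "\<And>m. (\<Sum>j\<le>m. \<psi> j * lag_coeff c n (m - j)) = (if m = 0 then 1 else 0)"
proof -
  define P where "P = fps_of_poly (lag_poly c n)"
  have P_nth: "fps_nth P k = complex_of_real (lag_coeff c n k)" for k
    unfolding P_def fps_of_poly_nth by (rule coeff_lag_poly)
  have no_roots: "\<And>z. cmod z \<le> 1 \<Longrightarrow> poly (lag_poly c n) z \<noteq> 0"
    using assms unfolding poly_lag_poly by blast
  obtain B \<rho> where \<rho>: "0 < \<rho>" "\<rho> < 1" and decay: "\<And>j. cmod (fps_nth (inverse P) j) \<le> B * \<rho> ^ j"
    using fps_inverse_coeff_geometric_decay[OF no_roots] unfolding P_def by blast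
  define \<psi> where "\<psi> j = Re (fps_nth (inverse P) j)" for j
  have "\<bar>\<psi> j\<bar> \<le> B * \<rho> ^ j" for j
    unfolding \<psi>_def using abs_Re_le_cmod[of "fps_nth (inverse P) j"] decay[of j] by linarith
  moreover have "(\<Sum>j\<le>m. \<psi> j * lag_coeff c n (m - j)) = (if m = 0 then 1 else 0)" for m
  proof -
    have "fps_nth P 0 \<noteq> 0" unfolding P_nth by (simp add: lag_coeff_def)
    then have "fps_nth (inverse P * P) m = (if m = 0 then 1 else 0)"
      by (simp add: inverse_mult_eq_1)
    then have "Re (\<Sum>j=0..m. fps_nth (inverse P) j * complex_of_real (lag_coeff c n (m - j)))
        = (if m = 0 then 1 else 0)"
      unfolding fps_mult_nth P_nth by simp
    then show ?thesis by (simp add: \<psi>_def atMost_atLeast0)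
  qed
  ultimately show ?thesis using that \<rho> by blast
qed

lemma convolution_inverse_partial_sum:
  fixes a \<psi> y v :: "nat \<Rightarrow> real"
  assumes a: "\<And>k. p < k \<Longrightarrow> a k = 0"
    and conv: "\<And>m. (\<Sum>j\<le>m. \<psi> j * a (m - j)) = (if m = 0 then 1 else 0)"
    and v: "\<And>j. j < n \<Longrightarrow> v j = (\<Sum>i\<le>p. a i * y (j + i))"
  shows "(\<Sum>j<n. \<psi> j * v j)
    = (if 0 < n then y 0 else 0) + (\<Sum>m\<in>{n..<n+p}. (\<Sum>j<n. \<psi> j * a (m - j)) * y m)"
  using v
proof (induction n)
  case 0
  then show ?case by simp
next
  case (Suc n)
  define D where "D n m = (\<Sum>j<n. \<psi> j * a (m - j))" for n m
  have IH: "(\<Sum>j<n. \<psi> j * v j) = (if 0 < n then y 0 else 0) + (\<Sum>m\<in>{n..<n+p}. D n m * y m)"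
    using Suc by (simp add: D_def)
  have "(\<Sum>m\<in>{n..n+p}. a (m - n) * y m) = (\<Sum>i\<in>{0..p}. a i * y (i + n))"
    by (rule sum.reindex_bij_witness[of _ "\<lambda>i. i + n" "\<lambda>m. m - n"]) auto
  then have "v n = (\<Sum>m\<in>{n..n+p}. a (m - n) * y m)"
    using Suc.prems[of n] by (simp add: atMost_atLeast0 add.commute)
  then have "\<psi> n * v n = (\<Sum>m\<in>{n..n+p}. \<psi> n * a (m - n) * y m)"
    by (simp add: sum_distrib_left mult.assoc)
  moreover have "D n (n + p) = 0" unfolding D_def using a by (intro sum.neutral) auto
  then have "(\<Sum>m\<in>{n..<n+p}. D n m * y m) = (\<Sum>m\<in>{n..n+p}. D n m * y m)"
    by (simp add: atLeastLessThanSuc_atLeastAtMost[symmetric])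
  moreover have "D (Suc n) m = D n m + \<psi> n * a (m - n)" for m
    unfolding D_def by simp
  ultimately have "(\<Sum>m\<in>{n..<n+p}. D n m * y m) + \<psi> n * v n = (\<Sum>m\<in>{n..n+p}. D (Suc n) m * y m)"
    by (simp add: sum.distrib[symmetric] distrib_right)
  also have "\<dots> = D (Suc n) n * y n + (\<Sum>m\<in>{Suc n..<Suc n+p}. D (Suc n) m * y m)"
  proof -
    have "{n..n+p} = insert n {Suc n..<Suc n+p}" by auto
    then show ?thesis by simp
  qed
  also have "D (Suc n) n = (if n = 0 then 1 else 0)"
    using conv unfolding D_def by (simp add: lessThan_Suc_atMost)
  finally show ?case
    using IH by (cases "n = 0") (auto simp: D_def)
qed

lemma convolution_inverse_tail_bound:
  fixes a \<psi> :: "nat \<Rightarrow> real"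
  assumes conv: "\<And>m. (\<Sum>j\<le>m. \<psi> j * a (m - j)) = (if m = 0 then 1 else 0)"
    and \<psi>: "\<And>j. \<bar>\<psi> j\<bar> \<le> B * \<rho> ^ j" and \<rho>: "0 \<le> \<rho>" "\<rho> \<le> 1"
    and a: "\<And>k. \<bar>a k\<bar> \<le> A"
    and m: "n \<le> m" "m < n + p" "0 < m"
  shows "\<bar>\<Sum>j<n. \<psi> j * a (m - j)\<bar> \<le> real p * A * B * \<rho> ^ n"
proof -
  have split: "{..m} = {..<n} \<union> {n..m}" using m by auto
  have "(\<Sum>j\<le>m. \<psi> j * a (m - j)) = (\<Sum>j<n. \<psi> j * a (m - j)) + (\<Sum>j\<in>{n..m}. \<psi> j * a (m - j))"
    unfolding split by (subst sum.union_disjoint) auto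
  then have "\<bar>\<Sum>j<n. \<psi> j * a (m - j)\<bar> = \<bar>\<Sum>j\<in>{n..m}. \<psi> j * a (m - j)\<bar>"
    using conv[of m] m by simp
  also have "\<dots> \<le> (\<Sum>j\<in>{n..m}. \<bar>\<psi> j\<bar> * \<bar>a (m - j)\<bar>)"
    unfolding abs_mult[symmetric] by (rule sum_abs)
  also have "\<dots> \<le> (\<Sum>j\<in>{n..m}. A * B * \<rho> ^ n)"
  proof (rule sum_mono)
    fix j assume "j \<in> {n..m}"
    then have "B * \<rho> ^ j \<le> B * \<rho> ^ n"
      using \<rho> \<psi>[of 0] by (intro mult_left_mono power_decreasing) auto
    then have "\<bar>\<psi> j\<bar> * \<bar>a (m - j)\<bar> \<le> (B * \<rho> ^ n) * A"
      using \<psi>[of j] a[of "m - j"] by (intro mult_mono) auto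
    then show "\<bar>\<psi> j\<bar> * \<bar>a (m - j)\<bar> \<le> A * B * \<rho> ^ n" by (simp only: mult_ac)
  qed
  also have "\<dots> = real (Suc m - n) * (A * B * \<rho> ^ n)" by simp
  also have "\<dots> \<le> real p * (A * B * \<rho> ^ n)"
    using m \<rho> \<psi>[of 0] a[of 0] by (intro mult_right_mono) auto
  finally show ?thesis by (simp only: mult.assoc)
qed

lemma ar_truncated_inversion_error:
  fixes x u :: "int \<Rightarrow> real"
  assumes conv: "\<And>m. (\<Sum>j\<le>m. \<psi> j * lag_coeff c p (m - j)) = (if m = 0 then 1 else 0)"
    and \<psi>: "\<And>j. \<bar>\<psi> j\<bar> \<le> B * \<rho> ^ j" and \<rho>: "0 \<le> \<rho>" "\<rho> \<le> 1"
    and A: "\<And>k. \<bar>lag_coeff c p k\<bar> \<le> A"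
    and ar: "\<And>t. x t + (\<Sum>j=1..p. c j * x (t - int j)) = u t"
    and n: "0 < n"
  shows "\<bar>(\<Sum>j<n. \<psi> j * u (- int j)) - x 0\<bar>
    \<le> real p * A * B * \<rho> ^ n * (\<Sum>m\<in>{n..<n+p}. \<bar>x (- int m)\<bar>)"
proof -
  have u: "u (- int j) = (\<Sum>i\<le>p. lag_coeff c p i * x (- int (j + i)))" for j
  proof -
    have "(\<Sum>i\<le>p. lag_coeff c p i * x (- int (j + i)))
        = lag_coeff c p 0 * x (- int j) + (\<Sum>i=1..p. lag_coeff c p i * x (- int (j + i)))"
      by (simp add: atMost_atLeast0 sum.atLeast_Suc_atMost)
    also have "(\<Sum>i=1..p. lag_coeff c p i * x (- int (j + i))) = (\<Sum>i=1..p. c i * x (- int j - int i))"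
    proof (intro sum.cong refl)
      fix i assume "i \<in> {1..p}"
      moreover have "- int (j + i) = - int j - int i" by simp
      ultimately show "lag_coeff c p i * x (- int (j + i)) = c i * x (- int j - int i)"
        by (simp add: lag_coeff_def)
    qed
    finally show ?thesis using ar[of "- int j"] by (simp add: lag_coeff_def)
  qed
  have "lag_coeff c p k = 0" if "p < k" for k using that by (simp add: lag_coeff_def)
  from convolution_inverse_partial_sum[OF this conv,
      where n = n and v = "\<lambda>j. u (- int j)" and y = "\<lambda>m. x (- int m)"]
  have "(\<Sum>j<n. \<psi> j * u (- int j)) - x 0
      = (\<Sum>m\<in>{n..<n+p}. (\<Sum>j<n. \<psi> j * lag_coeff c p (m - j)) * x (- int m))"
    using u n by simp
  also have "\<bar>\<dots>\<bar> \<le> (\<Sum>m\<in>{n..<n+p}. \<bar>\<Sum>j<n. \<psi> j * lag_coeff c p (m - j)\<bar> * \<bar>x (- int m)\<bar>)"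
    unfolding abs_mult[symmetric] by (rule sum_abs)
  also have "\<dots> \<le> (\<Sum>m\<in>{n..<n+p}. real p * A * B * \<rho> ^ n * \<bar>x (- int m)\<bar>)"
    using convolution_inverse_tail_bound[OF conv \<psi> \<rho> A] n
    by (intro sum_mono mult_right_mono) auto
  finally show ?thesis by (simp add: sum_distrib_left)
qed

lemma abs_power_diff_le:
  fixes u v :: real
  assumes "0 \<le> u" "0 \<le> v"
  shows "\<bar>u ^ r - v ^ r\<bar> \<le> real r * \<bar>u - v\<bar> * (u + v) ^ (r - 1)"
proof -
  have ordered: "x ^ r - y ^ r \<le> real r * (x - y) * (x + y) ^ (r - 1)" if "0 \<le> y" "y \<le> x" for x y :: real
  proof -
    have "x ^ r - y ^ r = (x - y) * (\<Sum>i<r. y ^ (r - Suc i) * x ^ i)" by (rule power_diff_sumr2)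
    also have "\<dots> \<le> (x - y) * (\<Sum>i<r. (x + y) ^ (r - 1))"
    proof (intro mult_left_mono sum_mono)
      fix i assume "i \<in> {..<r}"
      then have "r - 1 = (r - Suc i) + i" by auto
      then have "(x + y) ^ (r - 1) = (x + y) ^ (r - Suc i) * (x + y) ^ i"
        by (simp only: power_add)
      moreover have "y ^ (r - Suc i) * x ^ i \<le> (x + y) ^ (r - Suc i) * (x + y) ^ i"
        using that by (intro mult_mono power_mono) auto
      ultimately show "y ^ (r - Suc i) * x ^ i \<le> (x + y) ^ (r - 1)" by simp
    qed (use that in auto)
    finally show ?thesis by (simp add: mult_ac)
  qed
  show ?thesis
  proof (cases "v \<le> u")
    case True
    then have "v ^ r \<le> u ^ r" using assms by (intro power_mono) auto
    then show ?thesis using ordered[of v u] True assms by simp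
  next
    case False
    then have "u ^ r \<le> v ^ r" using assms by (intro power_mono) auto
    then show ?thesis using ordered[of u v] False assms by (simp add: abs_minus_commute add.commute)
  qed
qed

lemma abs_power_perturbation_le:
  fixes x y W \<eta> D :: real
  assumes x: "\<bar>x\<bar> \<le> W" and y: "\<bar>y - x\<bar> \<le> \<eta> * W" and \<eta>: "0 \<le> \<eta>" "\<eta> \<le> D"
  shows "\<bar>\<bar>x\<bar> ^ r - \<bar>y\<bar> ^ r\<bar> \<le> real r * (2 + D) ^ (r - 1) * \<eta> * W ^ r"
proof (cases "r = 0")
  case False
  have W: "0 \<le> W" using x by linarith
  have "\<bar>\<bar>x\<bar> ^ r - \<bar>y\<bar> ^ r\<bar> \<le> real r * \<bar>\<bar>x\<bar> - \<bar>y\<bar>\<bar> * (\<bar>x\<bar> + \<bar>y\<bar>) ^ (r - 1)"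
    by (rule abs_power_diff_le) auto
  also have "\<dots> \<le> real r * (\<eta> * W) * ((2 + D) * W) ^ (r - 1)"
  proof (intro mult_mono power_mono)
    show "\<bar>\<bar>x\<bar> - \<bar>y\<bar>\<bar> \<le> \<eta> * W" using y by linarith
    have "\<eta> * W \<le> D * W" using \<eta> W by (intro mult_right_mono) auto
    then show "\<bar>x\<bar> + \<bar>y\<bar> \<le> (2 + D) * W" using x y by (simp add: algebra_simps)
  qed (use \<eta> W in auto)
  also have "\<dots> = real r * (2 + D) ^ (r - 1) * \<eta> * (W * W ^ (r - 1))"
    by (simp add: power_mult_distrib mult_ac)
  also have "W * W ^ (r - 1) = W ^ r" using False by (simp flip: power_Suc)
  finally show ?thesis .
qed simp

lemma sum_power_le_card_power_sum:
  fixes f :: "'b \<Rightarrow> real"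
  assumes "finite I" "I \<noteq> {}" "\<And>i. i \<in> I \<Longrightarrow> 0 \<le> f i"
  shows "(\<Sum>i\<in>I. f i) ^ k \<le> real (card I) ^ k * (\<Sum>i\<in>I. f i ^ k)"
proof -
  define M where "M = Max (f ` I)"
  have "M \<in> f ` I" unfolding M_def using assms by (intro Max_in) auto
  then obtain i0 where i0: "i0 \<in> I" "f i0 = M" by auto
  have le_M: "f i \<le> M" if "i \<in> I" for i unfolding M_def using assms that by auto
  have "(\<Sum>i\<in>I. f i) \<le> real (card I) * M" using sum_bounded_above[of I f M] le_M by simp
  then have "(\<Sum>i\<in>I. f i) ^ k \<le> (real (card I) * M) ^ k"
    using assms by (intro power_mono sum_nonneg) auto
  also have "\<dots> = real (card I) ^ k * f i0 ^ k" by (simp add: power_mult_distrib i0)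
  also have "\<dots> \<le> real (card I) ^ k * (\<Sum>i\<in>I. f i ^ k)"
    using assms i0 by (intro mult_left_mono member_le_sum) auto
  finally show ?thesis .
qed

lemma ar_truncated_inversion_power_error:
  fixes x u :: "int \<Rightarrow> real" and r :: nat
  assumes conv: "\<And>m. (\<Sum>j\<le>m. \<psi> j * lag_coeff c p (m - j)) = (if m = 0 then 1 else 0)"
    and \<psi>: "\<And>j. \<bar>\<psi> j\<bar> \<le> B * \<rho> ^ j" and \<rho>: "0 \<le> \<rho>" "\<rho> \<le> 1"
    and A: "\<And>k. \<bar>lag_coeff c p k\<bar> \<le> A"
    and ar: "\<And>t. x t + (\<Sum>j=1..p. c j * x (t - int j)) = u t"
    and n: "0 < n"
  defines "K \<equiv> real r * (2 + real p * A * B) ^ (r - 1) * (real p * A * B) * (real p + 1) ^ r"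
  shows "(\<bar>x 0\<bar> ^ r - \<bar>\<Sum>j<n. \<psi> j * u (- int j)\<bar> ^ r)\<^sup>2
    \<le> K\<^sup>2 * (\<rho> ^ n)\<^sup>2 * (\<Sum>m\<in>insert 0 {n..<n+p}. \<bar>x (- int m)\<bar> ^ (2 * r))"
proof -
  define D where "D = real p * A * B"
  define W where "W = (\<Sum>m\<in>insert 0 {n..<n+p}. \<bar>x (- int m)\<bar>)"
  have zero_notin: "0 \<notin> {n..<n+p}" using n by auto
  have W_split: "W = \<bar>x 0\<bar> + (\<Sum>m\<in>{n..<n+p}. \<bar>x (- int m)\<bar>)" using zero_notin by (simp add: W_def)
  have D: "0 \<le> D" using A[of 0] \<psi>[of 0] by (simp add: D_def lag_coeff_def)
  have "\<bar>\<bar>x 0\<bar> ^ r - \<bar>\<Sum>j<n. \<psi> j * u (- int j)\<bar> ^ r\<bar> \<le> real r * (2 + D) ^ (r - 1) * (D * \<rho> ^ n) * W ^ r"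
  proof (rule abs_power_perturbation_le)
    show "\<bar>x 0\<bar> \<le> W" by (simp add: W_split sum_nonneg)
    have "\<bar>(\<Sum>j<n. \<psi> j * u (- int j)) - x 0\<bar> \<le> D * \<rho> ^ n * (\<Sum>m\<in>{n..<n+p}. \<bar>x (- int m)\<bar>)"
      unfolding D_def by (rule ar_truncated_inversion_error[OF conv \<psi> \<rho> A ar n])
    also have "\<dots> \<le> D * \<rho> ^ n * W"
      using D \<rho> by (intro mult_left_mono) (auto simp: W_split)
    finally show "\<bar>(\<Sum>j<n. \<psi> j * u (- int j)) - x 0\<bar> \<le> D * \<rho> ^ n * W" .
    show "0 \<le> D * \<rho> ^ n" "D * \<rho> ^ n \<le> D"
      using D \<rho> by (auto simp: mult_left_le power_le_one)
  qed
  then have "(\<bar>x 0\<bar> ^ r - \<bar>\<Sum>j<n. \<psi> j * u (- int j)\<bar> ^ r)\<^sup>2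
      \<le> (real r * (2 + D) ^ (r - 1) * D)\<^sup>2 * (\<rho> ^ n)\<^sup>2 * W ^ (2 * r)"
    using power_mono[of _ _ 2] by (fastforce simp: power_mult_distrib power_mult mult_ac)
  also have "\<dots> \<le> (real r * (2 + D) ^ (r - 1) * D)\<^sup>2 * (\<rho> ^ n)\<^sup>2
      * ((real p + 1) ^ (2 * r) * (\<Sum>m\<in>insert 0 {n..<n+p}. \<bar>x (- int m)\<bar> ^ (2 * r)))"
    using sum_power_le_card_power_sum[of "insert 0 {n..<n+p}" "\<lambda>m. \<bar>x (- int m)\<bar>" "2 * r"] zero_notin
    by (intro mult_left_mono) (simp_all add: W_def add.commute)
  also have "\<dots> = K\<^sup>2 * (\<rho> ^ n)\<^sup>2 * (\<Sum>m\<in>insert 0 {n..<n+p}. \<bar>x (- int m)\<bar> ^ (2 * r))"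
    by (simp add: K_def D_def power_mult_distrib power_mult mult_ac)
  finally show ?thesis .
qed

lemma integrable_mult_square_integrable:
  fixes f g :: "'a \<Rightarrow> real"
  assumes [measurable]: "f \<in> borel_measurable M" "g \<in> borel_measurable M"
    and "integrable M (\<lambda>x. (f x)\<^sup>2)" "integrable M (\<lambda>x. (g x)\<^sup>2)"
  shows "integrable M (\<lambda>x. f x * g x)"
proof (rule Bochner_Integration.integrable_bound)
  show "integrable M (\<lambda>x. (f x)\<^sup>2 + (g x)\<^sup>2)" using assms by auto
  show "AE x in M. norm (f x * g x) \<le> norm ((f x)\<^sup>2 + (g x)\<^sup>2)"
  proof (rule AE_I2)
    fix x
    have "2 * (\<bar>f x\<bar> * \<bar>g x\<bar>) \<le> (f x)\<^sup>2 + (g x)\<^sup>2"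
      using sum_squares_bound[of "\<bar>f x\<bar>" "\<bar>g x\<bar>"] by (simp add: mult.assoc)
    then have "\<bar>f x\<bar> * \<bar>g x\<bar> \<le> (f x)\<^sup>2 + (g x)\<^sup>2"
      using zero_le_mult_iff[of "\<bar>f x\<bar>" "\<bar>g x\<bar>"] by linarith
    then show "norm (f x * g x) \<le> norm ((f x)\<^sup>2 + (g x)\<^sup>2)"
      by (simp add: abs_mult)
  qed
qed measurable

lemma square_integrable_diff:
  fixes f g :: "'a \<Rightarrow> real"
  assumes [measurable]: "f \<in> borel_measurable M" "g \<in> borel_measurable M"
    and "integrable M (\<lambda>x. (f x)\<^sup>2)" "integrable M (\<lambda>x. (g x)\<^sup>2)"
  shows "integrable M (\<lambda>x. (f x - g x)\<^sup>2)"
proof -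
  have "(\<lambda>x. (f x - g x)\<^sup>2) = (\<lambda>x. (f x)\<^sup>2 - 2 * (f x * g x) + (g x)\<^sup>2)"
    by (simp add: power2_eq_square algebra_simps)
  then show ?thesis
    using assms integrable_mult_square_integrable[OF assms] by simp
qed

lemma real_cond_exp_L2_optimal:
  fixes Y Z :: "'a \<Rightarrow> real"
  assumes "prob_space M" "subalgebra M F"
    and [measurable]: "Y \<in> borel_measurable M" and Y: "integrable M (\<lambda>\<omega>. (Y \<omega>)\<^sup>2)"
    and ZF: "Z \<in> borel_measurable F" and Z: "integrable M (\<lambda>\<omega>. (Z \<omega>)\<^sup>2)"
  shows "(\<integral>\<omega>. (Y \<omega> - real_cond_exp M F Y \<omega>)\<^sup>2 \<partial>M) \<le> (\<integral>\<omega>. (Y \<omega> - Z \<omega>)\<^sup>2 \<partial>M)"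
proof -
  interpret prob_space M by fact
  interpret finite_measure_subalgebra M F by unfold_locales (rule assms)
  define C where "C = real_cond_exp M F Y"
  define W where "W x = C x - Z x" for x
  have CF: "C \<in> borel_measurable F" unfolding C_def by simp
  then have WF: "W \<in> borel_measurable F" unfolding W_def using ZF by measurable
  have [measurable]: "C \<in> borel_measurable M" "Z \<in> borel_measurable M" "W \<in> borel_measurable M"
    using CF ZF WF measurable_from_subalg[OF subalg] by blast+
  have "integrable M Y" by (rule square_integrable_imp_integrable) (use Y in auto)
  then have C2: "integrable M (\<lambda>x. (C x)\<^sup>2)" unfolding C_def
    by (intro integrable_convex_cond_exp[where I = UNIV]) (use Y convex_power2 in auto)
  have W2: "integrable M (\<lambda>x. (W x)\<^sup>2)"
    unfolding W_def by (rule square_integrable_diff) (use C2 Z in auto)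
  have WY: "integrable M (\<lambda>x. W x * Y x)" by (rule integrable_mult_square_integrable) (use W2 Y in auto)
  have WC: "integrable M (\<lambda>x. W x * C x)" by (rule integrable_mult_square_integrable) (use W2 C2 in auto)
  have YC: "integrable M (\<lambda>x. (Y x - C x)\<^sup>2)" by (rule square_integrable_diff) (use Y C2 in auto)
  \<comment> \<open>Pythagoras: Y - C is orthogonal to the F-measurable W = C - Z\<close>
  have orth: "(\<integral>x. W x * C x \<partial>M) = (\<integral>x. W x * Y x \<partial>M)"
    unfolding C_def by (rule real_cond_exp_intg(2)) (use WY WF in auto)
  have "(Y x - Z x)\<^sup>2 = (Y x - C x)\<^sup>2 + (2 * (W x * Y x) - 2 * (W x * C x) + (W x)\<^sup>2)" for x
    unfolding W_def by (simp add: power2_eq_square algebra_simps)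
  then have "(\<integral>x. (Y x - Z x)\<^sup>2 \<partial>M) = (\<integral>x. (Y x - C x)\<^sup>2 \<partial>M) + (\<integral>x. (W x)\<^sup>2 \<partial>M)"
    using YC WY WC W2 orth by simp
  also have "\<dots> \<ge> (\<integral>x. (Y x - C x)\<^sup>2 \<partial>M)" by simp
  finally show ?thesis unfolding C_def .
qed

lemma measurable_shifted_proc:
  assumes "\<forall>t. X t \<in> borel_measurable M"
  shows "(\<lambda>\<omega> t. X (t + h) \<omega>) \<in> measurable M (Pi\<^sub>M UNIV (\<lambda>_. borel))"
  using assms by (intro measurable_PiM_single') auto

lemma stationary_proc_comp:
  assumes "stationary_proc M X" and [measurable]: "g \<in> borel_measurable borel"
  shows "stationary_proc M (\<lambda>t \<omega>. g (X t \<omega>))"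
proof -
  let ?P = "Pi\<^sub>M (UNIV::int set) (\<lambda>_. (borel::real measure))"
  have X: "\<forall>t. X t \<in> borel_measurable M"
    and shift: "\<And>h. distr M ?P (\<lambda>\<omega> t. X (t + h) \<omega>) = distr M ?P (\<lambda>\<omega> t. X t \<omega>)"
    using assms(1) unfolding stationary_proc_def by auto
  have "(\<lambda>f t. g (f t)) \<in> measurable ?P ?P"
    by (intro measurable_PiM_single') auto
  then have distr_comp: "distr M ?P (\<lambda>\<omega> t. g (X (t + h) \<omega>))
      = distr (distr M ?P (\<lambda>\<omega> t. X (t + h) \<omega>)) ?P (\<lambda>f t. g (f t))" for h
    by (subst distr_distr[OF _ measurable_shifted_proc[OF X]]) (auto simp: comp_def)
  show ?thesis
    unfolding stationary_proc_def
  proof (intro conjI allI)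
    show "(\<lambda>\<omega>. g (X t \<omega>)) \<in> borel_measurable M" for t
      using X by (intro measurable_compose[OF _ assms(2)]) auto
    show "distr M ?P (\<lambda>\<omega> t. g (X (t + h) \<omega>)) = distr M ?P (\<lambda>\<omega> t. g (X t \<omega>))" for h
      using distr_comp[of h] distr_comp[of 0] shift[of h] by simp
  qed
qed

lemma stationary_proc_integral:
  fixes g :: "real \<Rightarrow> real"
  assumes "stationary_proc M X" and [measurable]: "g \<in> borel_measurable borel"
    and "integrable M (\<lambda>\<omega>. g (X 0 \<omega>))"
  shows "integrable M (\<lambda>\<omega>. g (X t \<omega>))" "(\<integral>\<omega>. g (X t \<omega>) \<partial>M) = (\<integral>\<omega>. g (X 0 \<omega>) \<partial>M)"
proof -
  let ?P = "Pi\<^sub>M (UNIV::int set) (\<lambda>_. (borel::real measure))"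
  have X: "\<forall>t. X t \<in> borel_measurable M"
    and shift: "\<And>h. distr M ?P (\<lambda>\<omega> t. X (t + h) \<omega>) = distr M ?P (\<lambda>\<omega> t. X t \<omega>)"
    using assms(1) unfolding stationary_proc_def by auto
  have g0: "(\<lambda>f. g (f 0)) \<in> borel_measurable ?P" by measurable
  have integrable: "integrable (distr M ?P (\<lambda>\<omega> s. X (s + h) \<omega>)) (\<lambda>f. g (f 0))
      \<longleftrightarrow> integrable M (\<lambda>\<omega>. g (X h \<omega>))" for h
    using integrable_distr_eq[OF measurable_shifted_proc[OF X] g0, of h] by simp
  have integral: "integral\<^sup>L (distr M ?P (\<lambda>\<omega> s. X (s + h) \<omega>)) (\<lambda>f. g (f 0))
      = (\<integral>\<omega>. g (X h \<omega>) \<partial>M)" for h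
    using integral_distr[OF measurable_shifted_proc[OF X] g0, of h] by simp
  show "integrable M (\<lambda>\<omega>. g (X t \<omega>))"
    using integrable[of t] integrable[of 0] shift[of t] shift[of 0] assms(3) by simp
  show "(\<integral>\<omega>. g (X t \<omega>) \<partial>M) = (\<integral>\<omega>. g (X 0 \<omega>) \<partial>M)"
    using integral[of t] integral[of 0] shift[of t] shift[of 0] by simp
qed

lemma subalgebra_gen_sigma:
  assumes "\<forall>t. e t \<in> borel_measurable M"
  shows "subalgebra M (gen_sigma M e s t)"
proof -
  let ?G = "{e u -` B \<inter> space M | u B. s \<le> u \<and> u \<le> t \<and> B \<in> sets borel}"
  have "?G \<subseteq> Pow (space M)" by auto
  then have "space (gen_sigma M e s t) = space M" "sets (gen_sigma M e s t) = sigma_sets (space M) ?G"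
    by (simp_all add: gen_sigma_def)
  moreover have "?G \<subseteq> sets M" using assms by (auto intro!: measurable_sets)
  ultimately show ?thesis
    unfolding subalgebra_def using sets.sigma_sets_subset by simp
qed

lemma measurable_gen_sigma:
  assumes "s \<le> u" "u \<le> t"
  shows "e u \<in> borel_measurable (gen_sigma M e s t)"
proof -
  let ?G = "{e u -` B \<inter> space M | u B. s \<le> u \<and> u \<le> t \<and> B \<in> sets borel}"
  have "?G \<subseteq> Pow (space M)" by auto
  then show ?thesis
    unfolding gen_sigma_def measurable_def using assms by (auto intro!: sigma_sets.Basic)
qed

lemma geom_L2_NED_if_approximable:
  fixes Y e :: "int \<Rightarrow> 'a \<Rightarrow> real"
  assumes M: "prob_space M" and Y: "stationary_proc M Y" "integrable M (\<lambda>\<omega>. (Y 0 \<omega>)\<^sup>2)"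
    and e: "\<forall>t. e t \<in> borel_measurable M" and \<rho>: "0 < \<rho>" "\<rho> < 1"
    and approx: "\<forall>\<^sub>F k in sequentially. \<exists>Z. Z \<in> borel_measurable (gen_sigma M e (- int k) (int k))
      \<and> integrable M (\<lambda>\<omega>. (Z \<omega>)\<^sup>2) \<and> (\<integral>\<omega>. (Y 0 \<omega> - Z \<omega>)\<^sup>2 \<partial>M) \<le> (C * \<rho> ^ k)\<^sup>2"
  shows "geom_L2_NED M Y e"
proof -
  have Y0: "Y 0 \<in> borel_measurable M" using Y(1) by (simp add: stationary_proc_def)
  have nonneg: "0 \<le> ned_err M Y e k" for k by (simp add: ned_err_def)
  have bound: "\<forall>\<^sub>F k in sequentially. ned_err M Y e k \<le> \<bar>C\<bar> * \<rho> ^ k"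
    using approx
  proof eventually_elim
    case (elim k)
    then obtain Z where Z: "Z \<in> borel_measurable (gen_sigma M e (- int k) (int k))"
        "integrable M (\<lambda>\<omega>. (Z \<omega>)\<^sup>2)" and err: "(\<integral>\<omega>. (Y 0 \<omega> - Z \<omega>)\<^sup>2 \<partial>M) \<le> (C * \<rho> ^ k)\<^sup>2"
      by blast
    have "ned_err M Y e k \<le> sqrt (\<integral>\<omega>. (Y 0 \<omega> - Z \<omega>)\<^sup>2 \<partial>M)"
      unfolding ned_err_def
      by (intro real_sqrt_le_mono real_cond_exp_L2_optimal[OF M subalgebra_gen_sigma[OF e] Y0 Y(2) Z])
    also have "\<dots> \<le> sqrt ((C * \<rho> ^ k)\<^sup>2)" using err by (rule real_sqrt_le_mono)
    also have "\<dots> = \<bar>C\<bar> * \<rho> ^ k" using \<rho> by (simp add: abs_mult)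
    finally show ?case .
  qed
  have "exp (- (- ln \<rho>) * real k) = \<rho> ^ k" for k
    using \<rho> exp_of_nat_mult[of k "ln \<rho>"] by (simp add: mult.commute)
  then have "ned_err M Y e \<in> O(\<lambda>k. exp (- (- ln \<rho>) * real k))"
    using bound nonneg \<rho> by (intro bigoI[of _ "\<bar>C\<bar>"]) (auto elim!: eventually_mono)
  moreover have "ned_err M Y e \<longlonglongrightarrow> 0"
    by (rule real_tendsto_sandwich[OF _ bound tendsto_const])
      (use nonneg \<rho> in \<open>auto intro!: tendsto_mult_right_zero LIMSEQ_power_zero\<close>)
  ultimately show ?thesis
    unfolding geom_L2_NED_def L2_NED_def using Y \<rho> by (intro exI[of _ "ned_err M Y e"] exI[of _ "- ln \<rho>"]) auto
qed

lemma ma_partial_sum_measurable_gen_sigma: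
  assumes "n + q \<le> k + 1"
  shows "(\<lambda>\<omega>. \<Sum>j<n. \<psi> j * (e (- int j) \<omega> + (\<Sum>i=1..q. \<theta> i * e (- int j - int i) \<omega>)))
    \<in> borel_measurable (gen_sigma M e (- int k) (int k))"
  using assms
  by (intro borel_measurable_sum borel_measurable_times borel_measurable_add borel_measurable_const
      measurable_gen_sigma) auto

lemma ar_truncated_inversion_L2_error:
  fixes X u :: "int \<Rightarrow> 'a \<Rightarrow> real" and r :: nat
  assumes M: "prob_space M" and X: "stationary_proc M X" "integrable M (\<lambda>\<omega>. \<bar>X 0 \<omega>\<bar> ^ (2 * r))"
    and u: "\<And>t. u t \<in> borel_measurable M"
    and ar: "AE \<omega> in M. \<forall>t. X t \<omega> + (\<Sum>j=1..p. c j * X (t - int j) \<omega>) = u t \<omega>"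
    and conv: "\<And>m. (\<Sum>j\<le>m. \<psi> j * lag_coeff c p (m - j)) = (if m = 0 then 1 else 0)"
    and \<psi>: "\<And>j. \<bar>\<psi> j\<bar> \<le> B * \<rho> ^ j" and \<rho>: "0 \<le> \<rho>" "\<rho> \<le> 1"
    and A: "\<And>k. \<bar>lag_coeff c p k\<bar> \<le> A"
  obtains C where "\<And>n. 0 < n \<Longrightarrow> integrable M (\<lambda>\<omega>. (\<bar>\<Sum>j<n. \<psi> j * u (- int j) \<omega>\<bar> ^ r)\<^sup>2)
    \<and> (\<integral>\<omega>. (\<bar>X 0 \<omega>\<bar> ^ r - \<bar>\<Sum>j<n. \<psi> j * u (- int j) \<omega>\<bar> ^ r)\<^sup>2 \<partial>M) \<le> (C * \<rho> ^ n)\<^sup>2"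
proof -
  interpret prob_space M by (rule M)
  define K where "K = real r * (2 + real p * A * B) ^ (r - 1) * (real p * A * B) * (real p + 1) ^ r"
  define E where "E = (\<integral>\<omega>. \<bar>X 0 \<omega>\<bar> ^ (2 * r) \<partial>M)"
  have [measurable]: "X t \<in> borel_measurable M" "u t \<in> borel_measurable M" for t
    using X(1) u by (simp_all add: stationary_proc_def)
  have "(\<lambda>x::real. \<bar>x\<bar> ^ (2 * r)) \<in> borel_measurable borel" by measurable
  note moments = stationary_proc_integral[OF X(1) this X(2), folded E_def]
  have E: "0 \<le> E" unfolding E_def by simp
  have sq: "(\<bar>y\<bar> ^ r)\<^sup>2 = \<bar>y\<bar> ^ (2 * r)" for y :: real
    by (simp add: power_mult[symmetric] mult.commute)
  have "integrable M (\<lambda>\<omega>. (\<bar>\<Sum>j<n. \<psi> j * u (- int j) \<omega>\<bar> ^ r)\<^sup>2)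
    \<and> (\<integral>\<omega>. (\<bar>X 0 \<omega>\<bar> ^ r - \<bar>\<Sum>j<n. \<psi> j * u (- int j) \<omega>\<bar> ^ r)\<^sup>2 \<partial>M)
      \<le> (K * sqrt ((real p + 1) * E) * \<rho> ^ n)\<^sup>2" if n: "0 < n" for n
  proof -
    define S where "S \<omega> = (\<Sum>j<n. \<psi> j * u (- int j) \<omega>)" for \<omega>
    define I where "I = insert 0 {n..<n+p}"
    define G where "G \<omega> = K\<^sup>2 * (\<rho> ^ n)\<^sup>2 * (\<Sum>m\<in>I. \<bar>X (- int m) \<omega>\<bar> ^ (2 * r))" for \<omega>
    have [measurable]: "S \<in> borel_measurable M" unfolding S_def by measurable
    have "card I = p + 1" using n by (simp add: I_def)
    then have G: "integrable M G" "(\<integral>\<omega>. G \<omega> \<partial>M) = (K * sqrt ((real p + 1) * E) * \<rho> ^ n)\<^sup>2"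
      unfolding G_def using moments E by (simp_all add: integral_sum power_mult_distrib)
    have pointwise: "AE \<omega> in M. (\<bar>X 0 \<omega>\<bar> ^ r - \<bar>S \<omega>\<bar> ^ r)\<^sup>2 \<le> G \<omega>"
      using ar
    proof eventually_elim
      case (elim \<omega>)
      show ?case
        unfolding S_def G_def I_def K_def
        by (rule ar_truncated_inversion_power_error[OF conv \<psi> \<rho> A _ n]) (use elim in blast)
    qed
    have diff: "integrable M (\<lambda>\<omega>. (\<bar>X 0 \<omega>\<bar> ^ r - \<bar>S \<omega>\<bar> ^ r)\<^sup>2)"
      by (rule Bochner_Integration.integrable_bound[OF G(1)])
        (use pointwise in \<open>auto elim!: eventually_mono intro: order_trans[OF _ abs_ge_self]\<close>)
    have "integrable M (\<lambda>\<omega>. (\<bar>X 0 \<omega>\<bar> ^ r - (\<bar>X 0 \<omega>\<bar> ^ r - \<bar>S \<omega>\<bar> ^ r))\<^sup>2)"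
      by (rule square_integrable_diff) (use moments diff in \<open>auto simp: sq\<close>)
    moreover have "(\<integral>\<omega>. (\<bar>X 0 \<omega>\<bar> ^ r - \<bar>S \<omega>\<bar> ^ r)\<^sup>2 \<partial>M) \<le> (\<integral>\<omega>. G \<omega> \<partial>M)"
      by (intro integral_mono_AE diff G(1) pointwise)
    ultimately show ?thesis unfolding S_def G(2) by simp
  qed
  then show ?thesis using that by blast
qed

lemma arma_abs_power_approximation:
  fixes X \<epsilon> :: "int \<Rightarrow> 'a \<Rightarrow> real" and \<phi> \<theta> \<psi> :: "nat \<Rightarrow> real" and r :: nat
  assumes M: "prob_space M" and X: "stationary_proc M X" "integrable M (\<lambda>\<omega>. \<bar>X 0 \<omega>\<bar> ^ (2 * r))"
    and \<epsilon>: "\<forall>t. \<epsilon> t \<in> borel_measurable M"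
    and arma: "\<forall>t. AE \<omega> in M. X t \<omega> + (\<Sum>j=1..p. \<phi> j * X (t - int j) \<omega>)
      = \<epsilon> t \<omega> + (\<Sum>j=1..q. \<theta> j * \<epsilon> (t - int j) \<omega>)"
    and conv: "\<And>m. (\<Sum>j\<le>m. \<psi> j * lag_coeff \<phi> p (m - j)) = (if m = 0 then 1 else 0)"
    and \<psi>: "\<And>j. \<bar>\<psi> j\<bar> \<le> B * \<rho> ^ j" and \<rho>: "0 < \<rho>" "\<rho> < 1"
  obtains C where "\<forall>\<^sub>F k in sequentially. \<exists>Z. Z \<in> borel_measurable (gen_sigma M \<epsilon> (- int k) (int k))
    \<and> integrable M (\<lambda>\<omega>. (Z \<omega>)\<^sup>2) \<and> (\<integral>\<omega>. (\<bar>X 0 \<omega>\<bar> ^ r - Z \<omega>)\<^sup>2 \<partial>M) \<le> (C * \<rho> ^ k)\<^sup>2"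
proof -
  define u where "u t \<omega> = \<epsilon> t \<omega> + (\<Sum>i=1..q. \<theta> i * \<epsilon> (t - int i) \<omega>)" for t \<omega>
  have u: "u t \<in> borel_measurable M" for t
    using \<epsilon> unfolding u_def by (intro borel_measurable_add borel_measurable_sum borel_measurable_times) auto
  have ar: "AE \<omega> in M. \<forall>t. X t \<omega> + (\<Sum>j=1..p. \<phi> j * X (t - int j) \<omega>) = u t \<omega>"
    using arma by (simp add: u_def AE_all_countable)
  obtain C where C: "\<And>n. 0 < n \<Longrightarrow> integrable M (\<lambda>\<omega>. (\<bar>\<Sum>j<n. \<psi> j * u (- int j) \<omega>\<bar> ^ r)\<^sup>2)
      \<and> (\<integral>\<omega>. (\<bar>X 0 \<omega>\<bar> ^ r - \<bar>\<Sum>j<n. \<psi> j * u (- int j) \<omega>\<bar> ^ r)\<^sup>2 \<partial>M) \<le> (C * \<rho> ^ n)\<^sup>2"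
    by (rule ar_truncated_inversion_L2_error[OF M X u ar conv \<psi> less_imp_le[OF \<rho>(1)]
        less_imp_le[OF \<rho>(2)] abs_lag_coeff_le], rule that)
  have "\<forall>\<^sub>F k in sequentially. \<exists>Z. Z \<in> borel_measurable (gen_sigma M \<epsilon> (- int k) (int k))
    \<and> integrable M (\<lambda>\<omega>. (Z \<omega>)\<^sup>2) \<and> (\<integral>\<omega>. (\<bar>X 0 \<omega>\<bar> ^ r - Z \<omega>)\<^sup>2 \<partial>M) \<le> (C / \<rho> ^ q * \<rho> ^ k)\<^sup>2"
    using eventually_ge_at_top[of q]
  proof eventually_elim
    case (elim k)
    \<comment> \<open>the partial sum of length n only involves the innovations at times -(n + q - 1), ..., 0\<close>
    define n where "n = k + 1 - q"
    have n: "0 < n" "n + q \<le> k + 1" using elim by (auto simp: n_def)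
    have "(\<lambda>\<omega>. \<Sum>j<n. \<psi> j * u (- int j) \<omega>) \<in> borel_measurable (gen_sigma M \<epsilon> (- int k) (int k))"
      unfolding u_def using n(2) by (rule ma_partial_sum_measurable_gen_sigma)
    moreover have "(\<lambda>x::real. \<bar>x\<bar> ^ r) \<in> borel_measurable borel" by measurable
    ultimately have measurable: "(\<lambda>\<omega>. \<bar>\<Sum>j<n. \<psi> j * u (- int j) \<omega>\<bar> ^ r)
        \<in> borel_measurable (gen_sigma M \<epsilon> (- int k) (int k))"
      by (rule measurable_compose)
    have "\<rho> ^ n * \<rho> ^ q = \<rho> * \<rho> ^ k"
      using elim by (simp add: n_def flip: power_add power_Suc)
    also have "\<dots> \<le> \<rho> ^ k" using \<rho> by (simp add: mult_left_le_one_le)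
    finally have "\<rho> ^ n \<le> \<rho> ^ k / \<rho> ^ q" using \<rho> by (simp add: pos_le_divide_eq)
    then have "C\<^sup>2 * (\<rho> ^ n)\<^sup>2 \<le> C\<^sup>2 * (\<rho> ^ k / \<rho> ^ q)\<^sup>2"
      using \<rho> by (intro mult_left_mono power_mono) auto
    then have "(C * \<rho> ^ n)\<^sup>2 \<le> (C / \<rho> ^ q * \<rho> ^ k)\<^sup>2"
      by (simp add: power_mult_distrib power_divide)
    with measurable C[OF n(1)] show ?case by fastforce
  qed
  then show ?thesis by (rule that)
qed

theorem lemma3:
  fixes M :: "'a measure"
    and X \<epsilon> :: "int \<Rightarrow> 'a \<Rightarrow> real"
    and \<phi> \<theta> :: "nat \<Rightarrow> real"
    and p0 q0 r :: nat
  assumes "prob_space M"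
    and "p0 \<ge> 1"
    and "\<phi> p0 \<noteq> 0"
    and "q0 > 0 \<longrightarrow> \<theta> q0 \<noteq> 0"
    and "\<not> (\<exists>z. lagpoly \<phi> p0 z = 0 \<and> lagpoly \<theta> q0 z = 0)"
    and "\<forall>z. cmod z \<le> 1 \<longrightarrow> lagpoly \<phi> p0 z \<noteq> 0"
    and "stationary_proc M X"
    and "\<forall>t. \<epsilon> t \<in> borel_measurable M"
    and "\<forall>t. integrable M (\<lambda>\<omega>. (\<epsilon> t \<omega>)\<^sup>2)"
    and "\<forall>t. (\<integral>\<omega>. \<epsilon> t \<omega> \<partial>M) = 0"
    and "\<forall>t. AE \<omega> in M. X t \<omega> + (\<Sum>j=1..p0. \<phi> j * X (t - int j) \<omega>)
                        = \<epsilon> t \<omega> + (\<Sum>j=1..q0. \<theta> j * \<epsilon> (t - int j) \<omega>)"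
    and "r > 0"
    and "integrable M (\<lambda>\<omega>. \<bar>X 0 \<omega>\<bar> ^ (2 * r))"
  shows "geom_L2_NED M (\<lambda>t \<omega>. \<bar>X t \<omega>\<bar> ^ r) \<epsilon>"
proof -
  obtain \<psi> B \<rho> where \<rho>: "0 < \<rho>" "\<rho> < 1" and \<psi>: "\<And>j. \<bar>\<psi> j\<bar> \<le> B * \<rho> ^ j"
    and conv: "\<And>m. (\<Sum>j\<le>m. \<psi> j * lag_coeff \<phi> p0 (m - j)) = (if m = 0 then 1 else 0)"
    by (rule lag_coeff_inverse[OF assms(6)], rule that)
  obtain C where approx: "\<forall>\<^sub>F k in sequentially.
      \<exists>Z. Z \<in> borel_measurable (gen_sigma M \<epsilon> (- int k) (int k)) \<and> integrable M (\<lambda>\<omega>. (Z \<omega>)\<^sup>2)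
        \<and> (\<integral>\<omega>. (\<bar>X 0 \<omega>\<bar> ^ r - Z \<omega>)\<^sup>2 \<partial>M) \<le> (C * \<rho> ^ k)\<^sup>2"
    by (rule arma_abs_power_approximation[OF assms(1,7,13,8,11) conv \<psi> \<rho>], rule that)
  have "(\<lambda>x::real. \<bar>x\<bar> ^ r) \<in> borel_measurable borel" by measurable
  from stationary_proc_comp[OF assms(7) this]
  have stationary: "stationary_proc M (\<lambda>t \<omega>. \<bar>X t \<omega>\<bar> ^ r)" by simp
  have "integrable M (\<lambda>\<omega>. (\<bar>X 0 \<omega>\<bar> ^ r)\<^sup>2)"
    using assms(13) by (simp add: power_mult[symmetric] mult.commute)
  with stationary show ?thesis
    using geom_L2_NED_if_approximable[OF assms(1) _ _ assms(8) \<rho>] approx by simp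
qed

end
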